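(* Consider the standard sequential oligopoly with linear inverse demand $P(X)=a(\overline{X}-X)$, $a>0$, constant marginal cost $c\ge 0$ with $\overline{X}_c:=\overline{X}-\frac{c}{a}>0$, and a random arrival process of firms that never has arrivals after some finite period $T$. Let each firm hold arbitrary beliefs about the future arrival process (possibly different across firms, possibly depending on the observed cumulative quantity, the individual quantities of leaders, and any public or private signals). Then in every equilibrium, for every realization $\boldsymbol{n}=(n_1,\dots,n_T)$ of the arrival process, the total equilibrium quantity and individual quantities are $$X^*=\left[1-\frac{1}{\prod_{s=1}^T(1+n_s)}\right]\overline{X}_c,\qquad x_i^*=\frac{\overline{X}_c}{\prod_{s=1}^t(1+n_s)}\quad\text{for all } t\in\{1,\dots,T\},\ i\in\mathcal{I}_t .$$ In particular, the equilibrium quantity of each firm does not depend on the realized numbers of its followers $(n_{t+1},\dots,n_T)$ nor on the firm's beliefs about them.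
   Context: Firms produce a homogeneous good, each with constant marginal cost $c\ge0$; firm $i$ chooses $x_i\ge 0$, total quantity is $X=\sum_i x_i$, and firm $i$'s profit is $x_i(P(X)-c)$. Firms are partitioned into periods: $\mathcal{I}_t$ is the set of firms arriving in period $t$, $n_t=\#\mathcal{I}_t$. A firm $i\in\mathcal{I}_t$ observes the cumulative quantity $X_{t-1}=\sum_{s<t}\sum_{j\in\mathcal{I}_s}x_j$ of all earlier firms and the number $n_t$, and chooses $x_i$ simultaneously with the other firms in period $t$. In the stochastic version, the sequence $\boldsymbol{n}=(n_1,\dots,n_T)$ is a random variable with arbitrary distribution, and each firm maximizes its expected profit given its beliefs about the future arrivals $(n_{t+1},\dots,n_T)$; equilibrium means subgame perfect (sequentially rational) behavior with interior solutions. *)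

theory Defs
  imports "HOL-Probability.Probability_Mass_Function"
begin

text \<open>A history is a list of per-period quantity vectors: entry s-1 lists the
  individual quantities of the firms of period s.  A strategy profile
  sigma h m j gives the quantity of firm j (j < m) of the period following
  history h, when that period has m arrivals.  Beliefs beta h m j are a
  probability distribution over arrival sequences (nat => nat, period s
  has nn s arrivals); only the entries for periods after the firm's own
  period (and up to T) are used.\<close>

type_synonym history = "real list list"
type_synonym strategy = "history \<Rightarrow> nat \<Rightarrow> nat \<Rightarrow> real"
type_synonym beliefs = "history \<Rightarrow> nat \<Rightarrow> nat \<Rightarrow> (nat \<Rightarrow> nat) pmf"

definition stage :: "strategy \<Rightarrow> history \<Rightarrow> nat \<Rightarrow> real list" where
  "stage \<sigma> h m = map (\<sigma> h m) [0..<m]"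

fun extend :: "strategy \<Rightarrow> (nat \<Rightarrow> nat) \<Rightarrow> history \<Rightarrow> nat \<Rightarrow> history" where
  "extend \<sigma> nn h 0 = h"
| "extend \<sigma> nn h (Suc k) = extend \<sigma> nn (h @ [stage \<sigma> h (nn (Suc (length h)))]) k"

definition total :: "history \<Rightarrow> real" where
  "total h = sum_list (map sum_list h)"

definition price :: "real \<Rightarrow> real \<Rightarrow> real \<Rightarrow> real" where
  "price a Xbar X = a * (Xbar - X)"

definition valid_history :: "history \<Rightarrow> bool" where
  "valid_history h = (\<forall>q\<in>set h. \<forall>x\<in>set q. 0 \<le> x)"

definition exp_profit ::
  "real \<Rightarrow> real \<Rightarrow> real \<Rightarrow> nat \<Rightarrow> strategy \<Rightarrow> beliefs \<Rightarrow> history \<Rightarrow> nat \<Rightarrow> nat \<Rightarrow> real \<Rightarrow> real" where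
  "exp_profit a Xbar c T \<sigma> \<beta> h m j y =
     measure_pmf.expectation (\<beta> h m j)
       (\<lambda>\<omega>. y * (price a Xbar
            (total (extend \<sigma> \<omega> (h @ [(stage \<sigma> h m)[j := y]]) (T - Suc (length h)))) - c))"

definition is_equilibrium ::
  "real \<Rightarrow> real \<Rightarrow> real \<Rightarrow> nat \<Rightarrow> strategy \<Rightarrow> beliefs \<Rightarrow> bool" where
  "is_equilibrium a Xbar c T \<sigma> \<beta> =
     (\<forall>h m j. valid_history h \<longrightarrow> length h < T \<longrightarrow> j < m \<longrightarrow>
        0 \<le> \<sigma> h m j \<and>
        (\<forall>y\<ge>0. exp_profit a Xbar c T \<sigma> \<beta> h m j y \<le> exp_profit a Xbar c T \<sigma> \<beta> h m j (\<sigma> h m j)))"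

end

theory Submission
  imports Defs
begin

text \<open>Write \<open>Xc = Xbar - c/a\<close>, so that \<open>P(X) - c = a (Xc - X)\<close>, and call \<open>Xc - X\<close> the residual
  demand.  By backward induction, in every subgame the \<open>m\<close> firms of a period facing residual
  demand \<open>R\<close> each produce \<open>max R 0 / (1 + m)\<close>, so every period divides a positive residual
  demand by \<open>1 + m\<close>.  Given this continuation, a firm left with residual demand \<open>R'\<close> by the
  other firms of its period earns \<open>a y (R' - y) q\<close> for \<open>y < R'\<close> and \<open>a y (R' - y)\<close> otherwise,
  where \<open>q > 0\<close> is the expected reciprocal of the product of the factors \<open>1 + n\<^sub>s\<close> of the later
  periods under its beliefs.  Whatever \<open>q\<close> is, the unique best reply is \<open>max R' 0 / 2\<close>, and the
  only profile of mutual best replies is the symmetric one \<open>max R 0 / (1 + m)\<close>.\<close>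

lemma sum_list_list_update:
  fixes xs :: "'a::ab_group_add list"
  shows "k < length xs \<Longrightarrow> sum_list (xs[k := x]) = sum_list xs - xs ! k + x"
  by (induction xs arbitrary: k) (auto split: nat.split)

lemma pmf_expectation_pos:
  fixes f :: "'a \<Rightarrow> real"
  assumes "\<And>x. 0 < f x" and "\<And>x. f x \<le> B"
  shows "0 < measure_pmf.expectation p f"
proof -
  have "integrable (measure_pmf p) f"
    using assms by (intro measure_pmf.integrable_const_bound[where B = B] AE_pmfI)
      (auto simp: abs_of_pos)
  then show ?thesis
    using measure_pmf.integral_less_AE_space[of p "\<lambda>_. 0" f] assms by simp
qed

lemma best_response_residual:
  fixes R q x :: real
  defines "u \<equiv> \<lambda>y. y * (R - y) * (if y < R then q else 1)"
  assumes q: "0 < q" and x: "0 \<le> x" and opt: "\<And>y. 0 \<le> y \<Longrightarrow> u y \<le> u x"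
  shows "x = max R 0 / 2"
proof (cases "R > 0")
  case True
  have "0 < q * (R / 2)\<^sup>2"
    using q True by simp
  also have "q * (R / 2)\<^sup>2 \<le> u x"
    using opt[of "R / 2"] True by (simp add: u_def power2_eq_square algebra_simps)
  finally have "0 < u x" .
  have "x < R"
  proof (rule ccontr)
    assume "\<not> x < R"
    with x True have "u x \<le> 0"
      by (simp add: u_def mult_nonneg_nonpos)
    with \<open>0 < u x\<close> show False
      by simp
  qed
  with opt[of "R / 2"] True have "q * (R / 2)\<^sup>2 \<le> q * (x * (R - x))"
    by (simp add: u_def power2_eq_square algebra_simps)
  then have "(R / 2)\<^sup>2 \<le> x * (R - x)"
    using q by (simp only: mult_le_cancel_left_pos)
  then have "(x - R / 2)\<^sup>2 \<le> 0"
    by (simp add: power2_eq_square algebra_simps)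
  then show ?thesis
    using True by simp
next
  case False
  have "x = 0"
  proof (rule ccontr)
    assume "x \<noteq> 0"
    with x False have "u x < 0"
      by (simp add: u_def mult_pos_neg)
    with opt[of 0] show False
      by (simp add: u_def)
  qed
  with False show ?thesis
    by simp
qed

lemma symmetric_best_responses:
  fixes x :: "nat \<Rightarrow> real" and R :: real
  assumes br: "\<And>i. i < m \<Longrightarrow> x i = max (R - (\<Sum>k<m. x k) + x i) 0 / 2"
    and i: "i < m"
  shows "x i = max R 0 / (1 + real m)"
proof -
  define S where "S = (\<Sum>k<m. x k)"
  have each: "x k = max (R - S) 0" if "k < m" for k
    using br[OF that] unfolding S_def[symmetric] by (auto simp: max_def split: if_splits)
  have "(\<Sum>k<m. x k) = (\<Sum>k<m. max (R - S) 0)"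
    by (rule sum.cong) (simp_all add: each)
  then have "S = real m * max (R - S) 0"
    by (simp add: S_def)
  then have "max (R - S) 0 = max R 0 / (1 + real m)"
  proof (cases "R - S > 0")
    case True
    moreover assume "S = real m * max (R - S) 0"
    ultimately have "R = (1 + real m) * (R - S)"
      by (simp add: algebra_simps)
    moreover from this True have "0 < R"
      by (metis add_pos_nonneg mult_pos_pos of_nat_0_le_iff zero_less_one)
    ultimately show ?thesis
      using True by (simp add: field_simps)
  qed simp
  with each[OF i] show ?thesis
    by simp
qed

lemma length_extend [simp]: "length (extend \<sigma> nn h k) = length h + k"
  by (induction k arbitrary: h) auto

lemma take_extend: "take (length h) (extend \<sigma> nn h k) = h"
proof (induction k arbitrary: h)
  case (Suc k)
  define h' where "h' = h @ [stage \<sigma> h (nn (Suc (length h)))]"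
  have "take (length h) (extend \<sigma> nn h (Suc k)) = take (length h) (take (length h') (extend \<sigma> nn h' k))"
    by (simp add: h'_def min_def)
  then show ?case
    by (simp only: Suc.IH) (simp add: h'_def)
qed simp

lemma nth_extend:
  "i < k \<Longrightarrow> extend \<sigma> nn h k ! (length h + i) = stage \<sigma> (extend \<sigma> nn h i) (nn (length h + Suc i))"
proof (induction k arbitrary: h i)
  case 0
  then show ?case by simp
next
  case (Suc k)
  define h' where "h' = h @ [stage \<sigma> h (nn (Suc (length h)))]"
  have "extend \<sigma> nn h (Suc k) = extend \<sigma> nn h' k"
    by (simp add: h'_def)
  moreover have "extend \<sigma> nn h' k ! length h = stage \<sigma> h (nn (Suc (length h)))"
    using take_extend[of h' \<sigma> nn k] nth_take[of "length h" "length h'" "extend \<sigma> nn h' k"]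
    by (simp add: h'_def)
  moreover have "extend \<sigma> nn h' k ! (length h + Suc i') =
      stage \<sigma> (extend \<sigma> nn h (Suc i')) (nn (length h + Suc (Suc i')))" if "i' < k" for i'
    using Suc.IH[of i' h'] that by (simp add: h'_def)
  ultimately show ?case
    using Suc.prems by (cases i) auto
qed

lemma total_snoc: "total (h @ [q]) = total h + sum_list q"
  by (simp add: total_def)

lemma length_stage [simp]: "length (stage \<sigma> h m) = m"
  by (simp add: stage_def)

lemma nth_stage [simp]: "j < m \<Longrightarrow> stage \<sigma> h m ! j = \<sigma> h m j"
  by (simp add: stage_def)

lemma sum_list_stage: "sum_list (stage \<sigma> h m) = (\<Sum>i<m. \<sigma> h m i)"
  by (simp add: stage_def sum_list_sum_nth atLeast0LessThan)

definition plays_cournot_from :: "real \<Rightarrow> nat \<Rightarrow> strategy \<Rightarrow> nat \<Rightarrow> bool" where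
  "plays_cournot_from Xc T \<sigma> n \<longleftrightarrow>
     (\<forall>h m j. valid_history h \<longrightarrow> n \<le> length h \<longrightarrow> length h < T \<longrightarrow> j < m \<longrightarrow>
        \<sigma> h m j = max (Xc - total h) 0 / (1 + real m))"

lemma valid_cournot_stage:
  assumes "plays_cournot_from Xc T \<sigma> (length h)" and "valid_history h" and "length h < T"
  shows "valid_history (h @ [stage \<sigma> h m])"
  using assms by (auto simp: plays_cournot_from_def valid_history_def stage_def)

lemma valid_extend:
  assumes "plays_cournot_from Xc T \<sigma> (length h)" and "valid_history h" and "length h + k \<le> T"
  shows "valid_history (extend \<sigma> nn h k)"
  using assms
proof (induction k arbitrary: h)
  case (Suc k)
  then show ?case
    using valid_cournot_stage[of Xc T \<sigma> h] by (auto simp: plays_cournot_from_def)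
qed simp

lemma residual_extend:
  assumes "plays_cournot_from Xc T \<sigma> (length h)" and "valid_history h" and "length h + k \<le> T"
  shows "Xc - total (extend \<sigma> nn h k) =
    (if Xc - total h > 0
     then (Xc - total h) / (\<Prod>s\<in>{Suc (length h)..length h + k}. 1 + real (nn s))
     else Xc - total h)"
  using assms
proof (induction k arbitrary: h)
  case 0
  then show ?case by simp
next
  case (Suc k)
  define m where "m = nn (Suc (length h))"
  define R where "R = Xc - total h"
  define h' where "h' = h @ [stage \<sigma> h m]"
  define P' where "P' = (\<Prod>s\<in>{Suc (Suc (length h))..Suc (length h) + k}. 1 + real (nn s))"
  have quantity: "\<sigma> h m j = max R 0 / (1 + real m)" if "j < m" for j
    using Suc.prems that unfolding plays_cournot_from_def R_def by auto
  have "valid_history h'"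
    using valid_cournot_stage Suc.prems unfolding h'_def by simp
  moreover have "plays_cournot_from Xc T \<sigma> (length h')"
    using Suc.prems(1) by (auto simp: plays_cournot_from_def h'_def)
  moreover have "length h' + k \<le> T"
    using Suc.prems(3) by (simp add: h'_def)
  ultimately have IH: "Xc - total (extend \<sigma> nn h' k) =
    (if Xc - total h' > 0 then (Xc - total h') / P' else Xc - total h')"
    using Suc.IH by (simp add: h'_def P'_def)
  have "Xc - total h' = R - real m * (max R 0 / (1 + real m))"
    using quantity by (simp add: h'_def total_snoc sum_list_stage R_def)
  also have "\<dots> = (if R > 0 then R / (1 + real m) else R)"
    by (cases "R > 0") (simp_all add: field_simps)
  finally have stage: "Xc - total h' = (if R > 0 then R / (1 + real m) else R)" .
  have "(\<Prod>s\<in>{Suc (length h)..length h + Suc k}. 1 + real (nn s)) = (1 + real m) * P'"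
    by (simp add: m_def P'_def prod.atLeast_Suc_atMost)
  moreover have "extend \<sigma> nn h (Suc k) = extend \<sigma> nn h' k"
    by (simp add: h'_def m_def)
  ultimately show ?case
    using IH stage unfolding R_def[symmetric] by (cases "R > 0") simp_all
qed

lemma exp_profit_cournot_continuation:
  fixes \<beta> :: beliefs
  assumes a: "a > 0" and play: "plays_cournot_from (Xbar - c / a) T \<sigma> (Suc (length h))"
    and h: "valid_history h" "length h < T" and j: "j < m"
    and others: "\<And>i. i < m \<Longrightarrow> 0 \<le> \<sigma> h m i" and y: "0 \<le> y"
  defines "R \<equiv> Xbar - c / a - total h - (\<Sum>i<m. \<sigma> h m i) + \<sigma> h m j"
    and "q \<equiv> measure_pmf.expectation (\<beta> h m j)
          (\<lambda>\<omega>. 1 / (\<Prod>s\<in>{Suc (Suc (length h))..T}. 1 + real (\<omega> s)))"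
  shows "exp_profit a Xbar c T \<sigma> \<beta> h m j y = a * (y * (R - y) * (if y < R then q else 1))"
proof -
  define hy where "hy = h @ [(stage \<sigma> h m)[j := y]]"
  have "valid_history hy"
    using h others y set_update_subset_insert[of "stage \<sigma> h m" j y]
    by (auto simp: hy_def valid_history_def stage_def)
  moreover have "Xbar - c / a - total hy = R - y"
    using j by (simp add: hy_def R_def total_snoc sum_list_list_update sum_list_stage)
  ultimately have residual: "Xbar - c / a - total (extend \<sigma> \<omega> hy (T - Suc (length h))) =
      (if y < R then (R - y) / (\<Prod>s\<in>{Suc (Suc (length h))..T}. 1 + real (\<omega> s)) else R - y)"
    for \<omega>
    using residual_extend[of "Xbar - c / a" T \<sigma> hy "T - Suc (length h)" \<omega>] play h
    by (simp add: hy_def)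
  have profit: "y * (price a Xbar X - c) = a * y * (Xbar - c / a - X)" for X
    using a by (simp add: price_def field_simps)
  show ?thesis
    unfolding exp_profit_def hy_def[symmetric] profit residual q_def
    by (simp add: divide_inverse)
qed

lemma equilibrium_stage_is_cournot:
  assumes a: "a > 0" and eq: "is_equilibrium a Xbar c T \<sigma> \<beta>"
    and play: "plays_cournot_from (Xbar - c / a) T \<sigma> (Suc (length h))"
    and h: "valid_history h" "length h < T" and j: "j < m"
  shows "\<sigma> h m j = max (Xbar - c / a - total h) 0 / (1 + real m)"
proof (rule symmetric_best_responses[OF _ j])
  fix i assume i: "i < m"
  have others: "\<And>k. k < m \<Longrightarrow> 0 \<le> \<sigma> h m k"
    using eq h unfolding is_equilibrium_def by blast
  define q where "q = measure_pmf.expectation (\<beta> h m i)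
      (\<lambda>\<omega>. 1 / (\<Prod>s\<in>{Suc (Suc (length h))..T}. 1 + real (\<omega> s)))"
  have "1 \<le> (\<Prod>s\<in>{Suc (Suc (length h))..T}. 1 + real (\<omega> s))" for \<omega> :: "nat \<Rightarrow> nat"
    by (rule prod_ge_1) simp
  then have "0 < q"
    unfolding q_def
    by (intro pmf_expectation_pos[where B = 1]) (simp_all add: less_le_trans[OF zero_less_one])
  define R where "R = Xbar - c / a - total h - (\<Sum>k<m. \<sigma> h m k) + \<sigma> h m i"
  have x: "0 \<le> \<sigma> h m i"
    using others i .
  have profit: "exp_profit a Xbar c T \<sigma> \<beta> h m i y = a * (y * (R - y) * (if y < R then q else 1))"
    if "0 \<le> y" for y
    using exp_profit_cournot_continuation[OF a play h i others that] unfolding R_def q_def .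
  have "y * (R - y) * (if y < R then q else 1)
      \<le> \<sigma> h m i * (R - \<sigma> h m i) * (if \<sigma> h m i < R then q else 1)"
    if y: "0 \<le> y" for y
  proof -
    have "exp_profit a Xbar c T \<sigma> \<beta> h m i y \<le> exp_profit a Xbar c T \<sigma> \<beta> h m i (\<sigma> h m i)"
      using eq h i y unfolding is_equilibrium_def by blast
    with a show ?thesis
      unfolding profit[OF y] profit[OF x] by simp
  qed
  from best_response_residual[OF \<open>0 < q\<close> x this]
  show "\<sigma> h m i = max (Xbar - c / a - total h - (\<Sum>k<m. \<sigma> h m k) + \<sigma> h m i) 0 / 2"
    by (simp add: R_def)
qed

lemma equilibrium_plays_cournot:
  assumes "a > 0" and "is_equilibrium a Xbar c T \<sigma> \<beta>"
  shows "plays_cournot_from (Xbar - c / a) T \<sigma> 0"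
proof -
  have "plays_cournot_from (Xbar - c / a) T \<sigma> n" if "n \<le> T" for n
    using that
  proof (induction rule: inc_induct)
    case base
    then show ?case by (simp add: plays_cournot_from_def)
  next
    case (step n)
    then show ?case
      using equilibrium_stage_is_cournot[OF assms] unfolding plays_cournot_from_def
      by (metis Suc_leI le_neq_implies_less)
  qed
  then show ?thesis
    by simp
qed

lemma residual_cournot_path:
  assumes play: "plays_cournot_from Xc T \<sigma> 0" and "0 < Xc" and "k \<le> T"
  shows "Xc - total (extend \<sigma> nn [] k) = Xc / (\<Prod>s=1..k. 1 + real (nn s))"
  using residual_extend[of Xc T \<sigma> "[]" k nn] assms
  by (simp add: valid_history_def total_def)

lemma quantity_cournot_path:
  assumes play: "plays_cournot_from Xc T \<sigma> 0" and "0 < Xc" and t: "t < T" and j: "j < nn (Suc t)"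
  shows "extend \<sigma> nn [] T ! t ! j = Xc / (\<Prod>s=1..Suc t. 1 + real (nn s))"
proof -
  define H where "H = extend \<sigma> nn [] t"
  have "valid_history H"
    using valid_extend[of Xc T \<sigma> "[]" t] play t by (simp add: H_def valid_history_def)
  then have "\<sigma> H (nn (Suc t)) j = max (Xc - total H) 0 / (1 + real (nn (Suc t)))"
    using play t j by (simp add: plays_cournot_from_def H_def)
  moreover have "extend \<sigma> nn [] T ! t ! j = \<sigma> H (nn (Suc t)) j"
    using nth_extend[of t T \<sigma> nn "[]"] t j by (simp add: H_def)
  moreover have "max (Xc - total H) 0 = Xc / (\<Prod>s=1..t. 1 + real (nn s))"
    using residual_cournot_path[OF play \<open>0 < Xc\<close>, of t nn] t \<open>0 < Xc\<close>
    by (simp add: H_def prod_pos)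
  ultimately show ?thesis
    by (simp add: prod.cl_ivl_Suc)
qed

theorem proposition1:
  fixes a Xbar c :: real and T :: nat and \<sigma> :: strategy and \<beta> :: beliefs
    and nn :: "nat \<Rightarrow> nat"
  assumes "a > 0" and "c \<ge> 0" and "Xbar - c / a > 0"
    and "is_equilibrium a Xbar c T \<sigma> \<beta>"
  shows "total (extend \<sigma> nn [] T)
           = (1 - 1 / (\<Prod>s=1..T. 1 + real (nn s))) * (Xbar - c / a)
         \<and> (\<forall>t\<in>{1..T}. \<forall>j<nn t.
           extend \<sigma> nn [] T ! (t - 1) ! j = (Xbar - c / a) / (\<Prod>s=1..t. 1 + real (nn s)))"
proof -
  define Xc where "Xc = Xbar - c / a"
  have play: "plays_cournot_from Xc T \<sigma> 0" and "0 < Xc"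
    using equilibrium_plays_cournot[OF assms(1,4)] assms(3) by (simp_all add: Xc_def)
  have "(\<Prod>s=1..T. 1 + real (nn s)) > 0"
    by (simp add: prod_pos)
  then have "total (extend \<sigma> nn [] T) = (1 - 1 / (\<Prod>s=1..T. 1 + real (nn s))) * Xc"
    using residual_cournot_path[OF play \<open>0 < Xc\<close>, of T nn] by (simp add: algebra_simps)
  moreover have "extend \<sigma> nn [] T ! (t - 1) ! j = Xc / (\<Prod>s=1..t. 1 + real (nn s))"
    if "t \<in> {1..T}" and "j < nn t" for t j
    using quantity_cournot_path[OF play \<open>0 < Xc\<close>, of "t - 1" j nn] that
    by (cases t) (simp_all del: prod.cl_ivl_Suc)
  ultimately show ?thesis
    unfolding Xc_def by blast
qed

end
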